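(* (1) For all terms $t,s$, variable $x$ and type $A$: if $t,s\in\mathrm{SN}$ and $t\{x:=s\}\in[\![A]\!]$, then $(\lambda x.t)s\in[\![A]\!]$. (2) For all terms $t_1,t_2$ and types $A_1,A_2$: if $t_1\in[\![A_1]\!]$ and $t_2\in[\![A_2]\!]$, then $\pi_i\langle t_1,t_2\rangle\in[\![A_i]\!]$ for $i=1,2$.
   Context: Terms: $t,s,u ::= x \mid \lambda x.t \mid ts \mid \langle t,s\rangle \mid \pi_1 t \mid \pi_2 t$ (up to $\alpha$-renaming); $t\{x:=s\}$ is capture-avoiding substitution. Top-level rules: $(\lambda x.t)s \mapsto t\{x:=s\}$; $\pi_i\langle t_1,t_2\rangle \mapsto t_i$ ($i=1,2$); $\langle t,s\rangle u \mapsto \langle tu, su\rangle$; $\pi_i(\lambda x.t)\mapsto \lambda x.\pi_i t$ ($i=1,2$); $\to_{\mathsf{dist}}$ is the closure of these rules under all term constructors. $\mathrm{SN}$ is the set of strongly normalizing terms for $\to_{\mathsf{dist}}$. Types: $A ::= \tau \mid A\Rightarrow A \mid A\wedge A$. Interpretation: $[\![\tau]\!]=\mathrm{SN}$; $[\![A\Rightarrow B]\!]=\{t\mid \forall s\in[\![A]\!],\ ts\in[\![B]\!]\}$; $[\![A\wedge B]\!]=\{t\mid \pi_1t\in[\![A]\!]\text{ and }\pi_2 t\in[\![B]\!]\}$. *)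

theory Defs
  imports Main
begin

text \<open>Terms up to alpha-renaming, represented with de Bruijn indices.\<close>
datatype trm = Var nat | Lam trm | App trm trm | Pair trm trm | Proj1 trm | Proj2 trm

primrec lift :: "trm \<Rightarrow> nat \<Rightarrow> trm" where
  "lift (Var i) k = (if i < k then Var i else Var (Suc i))"
| "lift (Lam t) k = Lam (lift t (Suc k))"
| "lift (App t s) k = App (lift t k) (lift s k)"
| "lift (Pair t s) k = Pair (lift t k) (lift s k)"
| "lift (Proj1 t) k = Proj1 (lift t k)"
| "lift (Proj2 t) k = Proj2 (lift t k)"

primrec subst :: "trm \<Rightarrow> nat \<Rightarrow> trm \<Rightarrow> trm" where
  "subst (Var i) k s = (if k < i then Var (i - 1) else if i = k then s else Var i)"
| "subst (Lam t) k s = Lam (subst t (Suc k) (lift s 0))"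
| "subst (App t u) k s = App (subst t k s) (subst u k s)"
| "subst (Pair t u) k s = Pair (subst t k s) (subst u k s)"
| "subst (Proj1 t) k s = Proj1 (subst t k s)"
| "subst (Proj2 t) k s = Proj2 (subst t k s)"

inductive step :: "trm \<Rightarrow> trm \<Rightarrow> bool" (infix "\<rightarrow>\<^sub>d" 50) where
  beta: "App (Lam t) s \<rightarrow>\<^sub>d subst t 0 s"
| proj1_pair: "Proj1 (Pair t1 t2) \<rightarrow>\<^sub>d t1"
| proj2_pair: "Proj2 (Pair t1 t2) \<rightarrow>\<^sub>d t2"
| app_pair: "App (Pair t s) u \<rightarrow>\<^sub>d Pair (App t u) (App s u)"
| proj1_lam: "Proj1 (Lam t) \<rightarrow>\<^sub>d Lam (Proj1 t)"
| proj2_lam: "Proj2 (Lam t) \<rightarrow>\<^sub>d Lam (Proj2 t)"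
| lam: "t \<rightarrow>\<^sub>d t' \<Longrightarrow> Lam t \<rightarrow>\<^sub>d Lam t'"
| appL: "t \<rightarrow>\<^sub>d t' \<Longrightarrow> App t s \<rightarrow>\<^sub>d App t' s"
| appR: "s \<rightarrow>\<^sub>d s' \<Longrightarrow> App t s \<rightarrow>\<^sub>d App t s'"
| pairL: "t \<rightarrow>\<^sub>d t' \<Longrightarrow> Pair t s \<rightarrow>\<^sub>d Pair t' s"
| pairR: "s \<rightarrow>\<^sub>d s' \<Longrightarrow> Pair t s \<rightarrow>\<^sub>d Pair t s'"
| proj1: "t \<rightarrow>\<^sub>d t' \<Longrightarrow> Proj1 t \<rightarrow>\<^sub>d Proj1 t'"
| proj2: "t \<rightarrow>\<^sub>d t' \<Longrightarrow> Proj2 t \<rightarrow>\<^sub>d Proj2 t'"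

definition SN :: "trm set" where
  "SN = {t. Wellfounded.accp (\<lambda>u v. v \<rightarrow>\<^sub>d u) t}"

datatype ty = Atom nat | Arr ty ty | Conj ty ty

fun interp :: "ty \<Rightarrow> trm set" where
  "interp (Atom a) = SN"
| "interp (Arr A B) = {t. \<forall>s \<in> interp A. App t s \<in> interp B}"
| "interp (Conj A B) = {t. Proj1 t \<in> interp A \<and> Proj2 t \<in> interp B}"

end

theory Submission
  imports Defs
begin

text \<open>Girard's reducibility argument. Every interpretation is a reducibility candidate: a set
  of strongly normalizing terms closed under reduction that contains every neutral term (one that
  is neither an abstraction nor a pair) all of whose one-step reducts it contains. For such a set
  the redexes App (Lam t) s and Proj1 (Pair t1 t2), Proj2 (Pair t1 t2) are neutral, so it suffices
  to place all their reducts in the candidate; this is done by well-founded induction on the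
  strongly normalizing components, with the contracted redex itself in the candidate by assumption.\<close>

lemma lift_lift: "i < k + 1 \<Longrightarrow> lift (lift t i) (Suc k) = lift (lift t k) i"
  by (induct t arbitrary: i k) auto

lemma lift_subst [simp]:
  "j < i + 1 \<Longrightarrow> lift (subst t j s) i = subst (lift t (i + 1)) j (lift s i)"
  by (induct t arbitrary: i j s) (simp_all add: diff_Suc lift_lift split: nat.split)

lemma lift_subst_lt: "i < j + 1 \<Longrightarrow> lift (subst t j s) i = subst (lift t i) (j + 1) (lift s i)"
  by (induct t arbitrary: i j s) (simp_all add: lift_lift, linarith?)

lemma subst_lift [simp]: "subst (lift t k) k s = t"
  by (induct t arbitrary: k s) simp_all

lemma subst_subst:
  "i < j + 1 \<Longrightarrow> subst (subst t (Suc j) (lift v i)) i (subst u j v) = subst (subst t i u) j v"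
  by (induct t arbitrary: i j u v)
    (simp_all add: diff_Suc lift_lift [symmetric] lift_subst_lt split: nat.split)

abbreviation steps :: "trm \<Rightarrow> trm \<Rightarrow> bool" (infix "\<rightarrow>\<^sub>d\<^sup>*" 50) where
  "steps \<equiv> step\<^sup>*\<^sup>*"

lemma steps_congs:
  "a \<rightarrow>\<^sub>d\<^sup>* b \<Longrightarrow> Lam a \<rightarrow>\<^sub>d\<^sup>* Lam b"
  "a \<rightarrow>\<^sub>d\<^sup>* b \<Longrightarrow> App a c \<rightarrow>\<^sub>d\<^sup>* App b c"
  "a \<rightarrow>\<^sub>d\<^sup>* b \<Longrightarrow> App c a \<rightarrow>\<^sub>d\<^sup>* App c b"
  "a \<rightarrow>\<^sub>d\<^sup>* b \<Longrightarrow> Pair a c \<rightarrow>\<^sub>d\<^sup>* Pair b c"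
  "a \<rightarrow>\<^sub>d\<^sup>* b \<Longrightarrow> Pair c a \<rightarrow>\<^sub>d\<^sup>* Pair c b"
  "a \<rightarrow>\<^sub>d\<^sup>* b \<Longrightarrow> Proj1 a \<rightarrow>\<^sub>d\<^sup>* Proj1 b"
  "a \<rightarrow>\<^sub>d\<^sup>* b \<Longrightarrow> Proj2 a \<rightarrow>\<^sub>d\<^sup>* Proj2 b"
  by (induct rule: rtranclp_induct, auto intro: step.intros rtranclp.rtrancl_into_rtrancl)+

lemma step_lift: "r \<rightarrow>\<^sub>d s \<Longrightarrow> lift r i \<rightarrow>\<^sub>d lift s i"
  by (induct arbitrary: i rule: step.induct) (auto intro: step.intros)

lemma step_subst: "r \<rightarrow>\<^sub>d s \<Longrightarrow> subst r i t \<rightarrow>\<^sub>d subst s i t"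
proof (induct arbitrary: t i rule: step.induct)
  case (beta t u v i)
  have "subst (subst t (Suc i) (lift v 0)) 0 (subst u i v) = subst (subst t 0 u) i v"
    using subst_subst [of 0 i t v u] by simp
  then show ?case
    using step.beta [of "subst t (Suc i) (lift v 0)" "subst u i v"] by simp
qed (auto intro: step.intros)

lemma subst_step_arg: "r \<rightarrow>\<^sub>d s \<Longrightarrow> subst t i r \<rightarrow>\<^sub>d\<^sup>* subst t i s"
proof (induct t arbitrary: r s i)
  case (App t1 t2)
  then show ?case by (simp, meson steps_congs rtranclp_trans)
next
  case (Pair t1 t2)
  then show ?case by (simp, meson steps_congs rtranclp_trans)
qed (auto simp: step_lift steps_congs)

inductive_cases step_VarE: "Var i \<rightarrow>\<^sub>d u"
inductive_cases step_LamE: "Lam t \<rightarrow>\<^sub>d u"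
inductive_cases step_AppE: "App t s \<rightarrow>\<^sub>d u"
inductive_cases step_PairE: "Pair t s \<rightarrow>\<^sub>d u"
inductive_cases step_Proj1E: "Proj1 t \<rightarrow>\<^sub>d u"
inductive_cases step_Proj2E: "Proj2 t \<rightarrow>\<^sub>d u"

lemma SN_step: "t \<in> SN \<Longrightarrow> t \<rightarrow>\<^sub>d t' \<Longrightarrow> t' \<in> SN"
  unfolding SN_def by (auto intro: accp_downward)

lemma SN_intro: "(\<And>t'. t \<rightarrow>\<^sub>d t' \<Longrightarrow> t' \<in> SN) \<Longrightarrow> t \<in> SN"
  unfolding SN_def by (auto intro: accp.accI)

lemma SN_induct [consumes 1, case_names step]:
  assumes "t \<in> SN"
    and "\<And>t. t \<in> SN \<Longrightarrow> (\<And>t'. t \<rightarrow>\<^sub>d t' \<Longrightarrow> P t') \<Longrightarrow> P t"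
  shows "P t"
proof -
  from assms(1) have "Wellfounded.accp (\<lambda>u v. v \<rightarrow>\<^sub>d u) t" by (simp add: SN_def)
  then show ?thesis
    by (induct rule: accp_induct_rule) (rule assms(2), simp_all add: SN_def accp.accI)
qed

lemma SN_pair_induct [consumes 2, case_names step]:
  assumes "a \<in> SN" "b \<in> SN"
    and "\<And>a b. a \<in> SN \<Longrightarrow> b \<in> SN \<Longrightarrow>
      (\<And>a'. a \<rightarrow>\<^sub>d a' \<Longrightarrow> P a' b) \<Longrightarrow> (\<And>b'. b \<rightarrow>\<^sub>d b' \<Longrightarrow> P a b') \<Longrightarrow> P a b"
  shows "P a b"
  using assms(1,2)
proof (induct a arbitrary: b rule: SN_induct)
  case (step a)
  note IH_a = step
  from \<open>b \<in> SN\<close> show ?case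
  proof (induct rule: SN_induct)
    case (step b)
    show ?case
    proof (rule assms(3))
      show "P a' b" if "a \<rightarrow>\<^sub>d a'" for a'
        using IH_a(2) [OF that \<open>b \<in> SN\<close>] .
    qed (use IH_a(1) step in auto)
  qed
qed

lemma SN_context:
  assumes "C t \<in> SN" and C: "\<And>u u'. u \<rightarrow>\<^sub>d u' \<Longrightarrow> C u \<rightarrow>\<^sub>d C u'"
  shows "t \<in> SN"
proof -
  have "v = C t \<Longrightarrow> t \<in> SN" if "v \<in> SN" for v
    using that
  proof (induct arbitrary: t rule: SN_induct)
    case (step v)
    show ?case
      by (rule SN_intro) (use step C in blast)
  qed
  then show ?thesis using assms(1) by blast
qed

definition neutral :: "trm \<Rightarrow> bool" where
  "neutral t = (case t of Lam _ \<Rightarrow> False | Pair _ _ \<Rightarrow> False | _ \<Rightarrow> True)"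

definition candidate :: "trm set \<Rightarrow> bool" where
  "candidate X \<longleftrightarrow> X \<subseteq> SN \<and> (\<forall>t \<in> X. \<forall>t'. t \<rightarrow>\<^sub>d t' \<longrightarrow> t' \<in> X)
    \<and> (\<forall>t. neutral t \<longrightarrow> (\<forall>t'. t \<rightarrow>\<^sub>d t' \<longrightarrow> t' \<in> X) \<longrightarrow> t \<in> X)"

lemma candidateI:
  assumes "\<And>t. t \<in> X \<Longrightarrow> t \<in> SN"
    and "\<And>t t'. t \<in> X \<Longrightarrow> t \<rightarrow>\<^sub>d t' \<Longrightarrow> t' \<in> X"
    and "\<And>t. neutral t \<Longrightarrow> (\<And>t'. t \<rightarrow>\<^sub>d t' \<Longrightarrow> t' \<in> X) \<Longrightarrow> t \<in> X"
  shows "candidate X"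
  unfolding candidate_def using assms by blast

lemma candidate_SN: "candidate X \<Longrightarrow> t \<in> X \<Longrightarrow> t \<in> SN"
  unfolding candidate_def by blast

lemma candidate_step: "candidate X \<Longrightarrow> t \<in> X \<Longrightarrow> t \<rightarrow>\<^sub>d t' \<Longrightarrow> t' \<in> X"
  unfolding candidate_def by blast

lemma candidate_steps:
  assumes "candidate X" "t \<rightarrow>\<^sub>d\<^sup>* t'" "t \<in> X"
  shows "t' \<in> X"
  using assms(2,3) by (induct rule: rtranclp_induct) (auto intro: candidate_step [OF assms(1)])

lemma candidate_neutral:
  "candidate X \<Longrightarrow> neutral t \<Longrightarrow> (\<And>t'. t \<rightarrow>\<^sub>d t' \<Longrightarrow> t' \<in> X) \<Longrightarrow> t \<in> X"
  unfolding candidate_def by blast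

lemma candidate_Var: "candidate X \<Longrightarrow> Var i \<in> X"
  by (rule candidate_neutral) (auto simp: neutral_def elim: step_VarE)

lemma candidate_SN_set: "candidate SN"
  by (rule candidateI) (auto intro: SN_step SN_intro)

lemma candidate_arrow:
  assumes X: "candidate X" and Y: "candidate Y"
  shows "candidate {t. \<forall>s \<in> X. App t s \<in> Y}" (is "candidate ?F")
proof (rule candidateI)
  fix t assume "t \<in> ?F"
  then have "App t (Var 0) \<in> SN"
    using candidate_Var [OF X] candidate_SN [OF Y] by blast
  then show "t \<in> SN"
    by (rule SN_context) (rule step.appL)
next
  fix t t' assume "t \<in> ?F" "t \<rightarrow>\<^sub>d t'"
  then show "t' \<in> ?F"
    using candidate_step [OF Y] step.appL by blast
next
  fix t assume t: "neutral t" "\<And>t'. t \<rightarrow>\<^sub>d t' \<Longrightarrow> t' \<in> ?F"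
  have "App t s \<in> Y" if "s \<in> X" for s
  proof -
    from that candidate_SN [OF X] have "s \<in> SN" by blast
    then show ?thesis using \<open>s \<in> X\<close>
    proof (induct rule: SN_induct)
      case (step s)
      show ?case
      proof (rule candidate_neutral [OF Y])
        show "neutral (App t s)" by (simp add: neutral_def)
      next
        fix w assume "App t s \<rightarrow>\<^sub>d w"
        then show "w \<in> Y"
        proof cases
          case (appL t')
          then show ?thesis using t(2) step(3) by blast
        next
          case (appR s')
          then show ?thesis using step candidate_step [OF X] by blast
        qed (use t(1) in \<open>simp_all add: neutral_def\<close>)
      qed
    qed
  qed
  then show "t \<in> ?F" by blast
qed

lemma candidate_conj:
  assumes X: "candidate X" and Y: "candidate Y"
  shows "candidate {t. Proj1 t \<in> X \<and> Proj2 t \<in> Y}" (is "candidate ?F")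
proof (rule candidateI)
  fix t assume "t \<in> ?F"
  then have "Proj1 t \<in> SN" using candidate_SN [OF X] by blast
  then show "t \<in> SN"
    by (rule SN_context) (rule step.proj1)
next
  fix t t' assume "t \<in> ?F" "t \<rightarrow>\<^sub>d t'"
  then show "t' \<in> ?F"
    using candidate_step [OF X] candidate_step [OF Y] step.proj1 step.proj2 by blast
next
  fix t assume t: "neutral t" "\<And>t'. t \<rightarrow>\<^sub>d t' \<Longrightarrow> t' \<in> ?F"
  have "Proj1 t \<in> X"
  proof (rule candidate_neutral [OF X])
    fix w assume "Proj1 t \<rightarrow>\<^sub>d w"
    then show "w \<in> X"
      by (cases rule: step_Proj1E) (use t in \<open>auto simp: neutral_def\<close>)
  qed (simp add: neutral_def)
  moreover have "Proj2 t \<in> Y"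
  proof (rule candidate_neutral [OF Y])
    fix w assume "Proj2 t \<rightarrow>\<^sub>d w"
    then show "w \<in> Y"
      by (cases rule: step_Proj2E) (use t in \<open>auto simp: neutral_def\<close>)
  qed (simp add: neutral_def)
  ultimately show "t \<in> ?F" by blast
qed

lemma candidate_interp: "candidate (interp A)"
  by (induct A) (simp_all add: candidate_SN_set candidate_arrow candidate_conj)

lemma candidate_App_Lam:
  assumes X: "candidate X" and "t \<in> SN" "s \<in> SN" "subst t 0 s \<in> X"
  shows "App (Lam t) s \<in> X"
  using assms(2-4)
proof (induct t s rule: SN_pair_induct)
  case (step t s)
  show ?case
  proof (rule candidate_neutral [OF X])
    show "neutral (App (Lam t) s)" by (simp add: neutral_def)
  next
    fix w assume "App (Lam t) s \<rightarrow>\<^sub>d w"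
    then consider (beta) "w = subst t 0 s"
      | (body) t' where "w = App (Lam t') s" "t \<rightarrow>\<^sub>d t'"
      | (arg) s' where "w = App (Lam t) s'" "s \<rightarrow>\<^sub>d s'"
      by (auto elim!: step_AppE step_LamE)
    then show "w \<in> X"
    proof cases
      case beta
      then show ?thesis using step by simp
    next
      case (body t')
      then show ?thesis
        using step candidate_step [OF X] step_subst by blast
    next
      case (arg s')
      then show ?thesis
        using step candidate_steps [OF X] subst_step_arg by blast
    qed
  qed
qed

lemma candidate_Proj1_Pair:
  assumes X: "candidate X" and "a \<in> X" "b \<in> SN"
  shows "Proj1 (Pair a b) \<in> X"
  using candidate_SN [OF X \<open>a \<in> X\<close>] \<open>b \<in> SN\<close> \<open>a \<in> X\<close>
proof (induct a b rule: SN_pair_induct)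
  case (step a b)
  show ?case
  proof (rule candidate_neutral [OF X])
    show "neutral (Proj1 (Pair a b))" by (simp add: neutral_def)
  next
    fix w assume "Proj1 (Pair a b) \<rightarrow>\<^sub>d w"
    then consider (redex) "w = a"
      | (fst) a' where "w = Proj1 (Pair a' b)" "a \<rightarrow>\<^sub>d a'"
      | (snd) b' where "w = Proj1 (Pair a b')" "b \<rightarrow>\<^sub>d b'"
      by (auto elim!: step_Proj1E step_PairE)
    then show "w \<in> X"
    proof cases
      case redex
      then show ?thesis using step by simp
    next
      case (fst a')
      then show ?thesis using step candidate_step [OF X] by simp
    next
      case (snd b')
      then show ?thesis using step candidate_step [OF X] by simp
    qed
  qed
qed

lemma candidate_Proj2_Pair:
  assumes X: "candidate X" and "a \<in> SN" "b \<in> X"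
  shows "Proj2 (Pair a b) \<in> X"
  using \<open>a \<in> SN\<close> candidate_SN [OF X \<open>b \<in> X\<close>] \<open>b \<in> X\<close>
proof (induct a b rule: SN_pair_induct)
  case (step a b)
  show ?case
  proof (rule candidate_neutral [OF X])
    show "neutral (Proj2 (Pair a b))" by (simp add: neutral_def)
  next
    fix w assume "Proj2 (Pair a b) \<rightarrow>\<^sub>d w"
    then consider (redex) "w = b"
      | (fst) a' where "w = Proj2 (Pair a' b)" "a \<rightarrow>\<^sub>d a'"
      | (snd) b' where "w = Proj2 (Pair a b')" "b \<rightarrow>\<^sub>d b'"
      by (auto elim!: step_Proj2E step_PairE)
    then show "w \<in> X"
    proof cases
      case redex
      then show ?thesis using step by simp
    next
      case (fst a')
      then show ?thesis using step candidate_step [OF X] by simp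
    next
      case (snd b')
      then show ?thesis using step candidate_step [OF X] by simp
    qed
  qed
qed

theorem lemma6:
  shows "(\<forall>t s A. t \<in> SN \<longrightarrow> s \<in> SN \<longrightarrow> subst t 0 s \<in> interp A \<longrightarrow> App (Lam t) s \<in> interp A)
       \<and> (\<forall>t1 t2 A1 A2. t1 \<in> interp A1 \<longrightarrow> t2 \<in> interp A2 \<longrightarrow>
            Proj1 (Pair t1 t2) \<in> interp A1 \<and> Proj2 (Pair t1 t2) \<in> interp A2)"
proof (intro conjI allI impI)
  fix t s A
  assume "t \<in> SN" "s \<in> SN" "subst t 0 s \<in> interp A"
  then show "App (Lam t) s \<in> interp A"
    by (rule candidate_App_Lam [OF candidate_interp])
next
  fix t1 t2 A1 A2
  assume t1: "t1 \<in> interp A1" and t2: "t2 \<in> interp A2"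
  show "Proj1 (Pair t1 t2) \<in> interp A1"
    by (rule candidate_Proj1_Pair [OF candidate_interp t1 candidate_SN [OF candidate_interp t2]])
  show "Proj2 (Pair t1 t2) \<in> interp A2"
    by (rule candidate_Proj2_Pair [OF candidate_interp candidate_SN [OF candidate_interp t1] t2])
qed

end
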